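(* For every $n\ge1$ and $\epsilon>0$ there is a quantum algorithm that $\epsilon$-tests the Pauli group $\mathcal{P}_n$ using $O(1/\epsilon^2)$ queries to $U$, with implied constant independent of $n$ and $\epsilon$.
   Context: $n\ge1$, $N=2^n$. Pauli matrices $\sigma_0=I,\sigma_1=X,\sigma_2=Y,\sigma_3=Z$; for $\vec{x}\in\mathbb{Z}_4^n$, $\sigma_{\vec{x}}=\sigma_{x_1}\otimes\cdots\otimes\sigma_{x_n}$. $\mathcal{P}_n=\{i^k\sigma_{\vec{x}}: k\in\{0,1,2,3\},\vec{x}\in\mathbb{Z}_4^n\}$. $\|A\|=\sqrt{\mathrm{tr}(A^\dagger A)}$; $D(A,B)=\min_{\theta\in[0,2\pi)}\frac{1}{\sqrt{2N}}\|e^{i\theta}A-B\|$; $D(A,\mathcal{S})=\inf_{B\in\mathcal{S}}D(A,B)$. For $\mathcal{S}\subseteq\mathbb{U}_N$ (the $N\times N$ unitaries), $U$ has property $\mathcal{S}$ if $U=e^{i\theta}V$ for some $V\in\mathcal{S}$, real $\theta$; $U$ is $\epsilon$-far from $\mathcal{S}$ if $D(U,V)\ge\epsilon$ for all $V\in\mathcal{S}$. Testing model: the unknown $U\in\mathbb{U}_N$ is a black box; the algorithm may prepare arbitrary states on the system plus an ancilla, apply $U\otimes I$ (one query each), interleaved with arbitrary fixed quantum operations, and measure. It $\epsilon$-tests $\mathcal{S}$ if for every $U\in\mathbb{U}_N$ it accepts with probability $\ge2/3$ when $U$ has property $\mathcal{S}$ and with probability $\le1/3$ when $U$ is $\epsilon$-far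 from $\mathcal{S}$. *)

theory Defs
  imports Complex_Main "Jordan_Normal_Form.Matrix"
begin

definition ctrans :: "complex mat \<Rightarrow> complex mat" where
  "ctrans A = mat (dim_col A) (dim_row A) (\<lambda>(i,j). cnj (A $$ (j,i)))"

definition unitary_mat :: "nat \<Rightarrow> complex mat \<Rightarrow> bool" where
  "unitary_mat d A \<longleftrightarrow> A \<in> carrier_mat d d \<and> ctrans A * A = 1\<^sub>m d \<and> A * ctrans A = 1\<^sub>m d"

definition kron :: "complex mat \<Rightarrow> complex mat \<Rightarrow> complex mat" where
  "kron A B = mat (dim_row A * dim_row B) (dim_col A * dim_col B)
     (\<lambda>(i,j). A $$ (i div dim_row B, j div dim_col B) * B $$ (i mod dim_row B, j mod dim_col B))"

definition frob_norm :: "complex mat \<Rightarrow> real" where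
  "frob_norm A = sqrt (Re (\<Sum>i<dim_col A. (ctrans A * A) $$ (i,i)))"

definition cvec_norm :: "complex vec \<Rightarrow> real" where
  "cvec_norm v = sqrt (\<Sum>i<dim_vec v. (cmod (v $ i))\<^sup>2)"

definition pauli1 :: "nat \<Rightarrow> complex mat" where
  "pauli1 a = (if a = 0 then mat_of_rows_list 2 [[1,0],[0,1]]
          else if a = 1 then mat_of_rows_list 2 [[0,1],[1,0]]
          else if a = 2 then mat_of_rows_list 2 [[0,-\<i>],[\<i>,0]]
          else mat_of_rows_list 2 [[1,0],[0,-1]])"

fun pauli_string :: "nat list \<Rightarrow> complex mat" where
  "pauli_string [] = 1\<^sub>m 1"
| "pauli_string (a # as) = kron (pauli1 a) (pauli_string as)"

definition pauli_group :: "nat \<Rightarrow> complex mat set" where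
  "pauli_group n = {(\<i> ^ k) \<cdot>\<^sub>m pauli_string xs | k xs.
       k < 4 \<and> length xs = n \<and> set xs \<subseteq> {0..<4}}"

definition phase_dist :: "nat \<Rightarrow> complex mat \<Rightarrow> complex mat \<Rightarrow> real" where
  "phase_dist n A B = (INF \<theta>\<in>{0..<2*pi}.
       frob_norm (exp (\<i> * complex_of_real \<theta>) \<cdot>\<^sub>m A - B) / sqrt (2 * 2 ^ n))"

definition has_property :: "nat \<Rightarrow> complex mat set \<Rightarrow> complex mat \<Rightarrow> bool" where
  "has_property n S U \<longleftrightarrow> (\<exists>\<theta>::real. \<exists>V\<in>S. U = exp (\<i> * complex_of_real \<theta>) \<cdot>\<^sub>m V)"

definition eps_far :: "nat \<Rightarrow> real \<Rightarrow> complex mat set \<Rightarrow> complex mat \<Rightarrow> bool" where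
  "eps_far n \<epsilon> S U \<longleftrightarrow> (\<forall>V\<in>S. phase_dist n U V \<ge> \<epsilon>)"

text \<open>A query algorithm on an n-qubit system with an ancilla of dimension m:
  initial unit state psi on C^(2^n * m), fixed unitaries W_0, ..., W_q on the joint space,
  and an accepting projector P.  On input U it produces
  W_q (U (x) I) W_{q-1} ... (U (x) I) W_0 psi  and accepts with probability ||P phi||^2.
  The number of queries is q = length of the list minus one.\<close>
record qalg =
  anc_dim :: nat
  init_state :: "complex vec"
  ops :: "complex mat list"
  accept_proj :: "complex mat"

definition valid_qalg :: "nat \<Rightarrow> qalg \<Rightarrow> bool" where
  "valid_qalg n A \<longleftrightarrow>
     (let d = 2 ^ n * anc_dim A in
       anc_dim A \<ge> 1 \<and>
       init_state A \<in> carrier_vec d \<and> cvec_norm (init_state A) = 1 \<and>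
       ops A \<noteq> [] \<and> (\<forall>W\<in>set (ops A). unitary_mat d W) \<and>
       accept_proj A \<in> carrier_mat d d \<and>
       ctrans (accept_proj A) = accept_proj A \<and>
       accept_proj A * accept_proj A = accept_proj A)"

definition num_queries :: "qalg \<Rightarrow> nat" where
  "num_queries A = length (ops A) - 1"

fun run_ops :: "complex mat \<Rightarrow> complex mat list \<Rightarrow> complex vec \<Rightarrow> complex vec" where
  "run_ops Q [] v = v"
| "run_ops Q (W # Ws) v = run_ops Q Ws (W *\<^sub>v (Q *\<^sub>v v))"

definition final_state :: "qalg \<Rightarrow> complex mat \<Rightarrow> complex vec" where
  "final_state A U =
     (let Q = kron U (1\<^sub>m (anc_dim A)) in
      run_ops Q (tl (ops A)) (hd (ops A) *\<^sub>v init_state A))"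

definition accept_prob :: "qalg \<Rightarrow> complex mat \<Rightarrow> real" where
  "accept_prob A U = (cvec_norm (accept_proj A *\<^sub>v final_state A U))\<^sup>2"

definition eps_tests :: "nat \<Rightarrow> real \<Rightarrow> complex mat set \<Rightarrow> qalg \<Rightarrow> bool" where
  "eps_tests n \<epsilon> S A \<longleftrightarrow>
     (\<forall>U. unitary_mat (2 ^ n) U \<longrightarrow>
        (has_property n S U \<longrightarrow> accept_prob A U \<ge> 2/3) \<and>
        (eps_far n \<epsilon> S U \<longrightarrow> accept_prob A U \<le> 1/3))"

end

theory Submission
  imports Defs
begin

(* Write N = 2^n and |v(A)> = N^(-1/2) \<Sum>_{a,b} A_{ab} |a>|b> for the Choi vector of an N x N
   matrix A.  The tester prepares k copies of the maximally entangled state |v(I)>, applies U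
   to the first register of each copy (k queries) and measures the projector onto the span of
   the states |v(sigma_x)>^(\<otimes>k) for all Pauli strings sigma_x.  Because the Pauli strings are
   orthogonal for the Frobenius inner product, these states are orthonormal and the acceptance
   probability is \<Sum>_x r_x^(2k), where r_x = |<sigma_x, U>| / N.
   If U is a phase times a Pauli string, one r_x equals 1 and the tester accepts with
   probability 1.  If U is eps-far from the Pauli group, every r_x is at most 1 - eps^2 (by the
   definition of the phase distance) and \<Sum>_x r_x^2 \<le> 1 (Bessel's inequality), so the
   acceptance probability is at most (1 - eps^2)^(2(k-1)) \<le> 1/3 once k - 1 \<ge> 1/eps^2.
   For eps > 1 no unitary is eps-far and a query-free tester suffices. *)

section \<open>Mixed-radix indices\<close>

text \<open>The basis index i of (C^N)^(\<otimes>m) is read as m base-N digits; digit 0 is the least significant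
  one, i.e. the last tensor factor.\<close>

definition digit :: "nat \<Rightarrow> nat \<Rightarrow> nat \<Rightarrow> nat" where
  "digit N d i = i div N ^ d mod N"

lemma mixed_radix_less: "(b::nat) < M \<Longrightarrow> a < p \<Longrightarrow> b + M * a < p * M"
proof -
  assume "b < M" "a < p"
  hence "b + M * a < M + M * a" by linarith
  also have "\<dots> = M * Suc a" by simp
  also have "\<dots> \<le> M * p" using \<open>a < p\<close> by (intro mult_le_mono2) simp
  finally show ?thesis by (simp add: mult.commute)
qed

lemma mixed_radix_div_mod: "(x::nat) < m \<Longrightarrow> (x + m * a) div m = a \<and> (x + m * a) mod m = x"
  by simp

lemma digit_split:
  assumes "x < N ^ e" "N > 0"
  shows "digit N d (x + N ^ e * y) = (if d < e then digit N d x else digit N (d - e) y)"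
proof (cases "d < e")
  case True
  have "N ^ e = N ^ d * N ^ (e - d)" using True by (simp flip: power_add)
  hence "(x + N ^ e * y) div N ^ d = x div N ^ d + N ^ (e - d) * y"
    using assms by (simp add: mult.assoc)
  moreover have "N ^ (e - d) = N * N ^ (e - d - 1)" using True
    by (metis Suc_diff_Suc diff_Suc_1 power_Suc zero_less_diff)
  ultimately show ?thesis using True by (simp add: digit_def mult.assoc)
next
  case False
  have e: "N ^ d = N ^ e * N ^ (d - e)" using False by (simp flip: power_add)
  have "(x + N ^ e * y) div N ^ e = y" using assms by simp
  hence "(x + N ^ e * y) div N ^ d = y div N ^ (d - e)"
    by (simp add: e div_mult2_eq)
  thus ?thesis using False by (simp add: digit_def)
qed

lemma digit_0_mixed: "b < N \<Longrightarrow> digit N 0 (b + N * a) = b"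
  by (simp add: digit_def)

lemma digit_Suc_mixed: "b < N \<Longrightarrow> digit N (Suc s) (b + N * a) = digit N s a"
  using digit_split[of b N 1 "Suc s" a] by simp

lemma digit_less: "N > 0 \<Longrightarrow> digit N d i < N"
  by (simp add: digit_def)

lemma digit_div: "digit N d (j div N) = digit N (Suc d) j"
  by (simp add: digit_def div_mult2_eq power_Suc)

lemma sum_mixed_radix:
  fixes g :: "nat \<Rightarrow> 'a::comm_monoid_add"
  shows "(\<Sum>i<N * M. g i) = (\<Sum>a<N. \<Sum>b<M. g (b + M * a))"
proof -
  have bij: "bij_betw (\<lambda>(a,b). b + M * a) ({..<N} \<times> {..<M}) {..<N * M}"
  proof (rule bij_betw_byWitness[where f' = "\<lambda>i. (i div M, i mod M)"], goal_cases)
    case 1 thus ?case by auto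
  next
    case 2 thus ?case by (simp add: add.commute)
  next
    case 3 thus ?case by (auto intro: mixed_radix_less)
  next
    case 4 thus ?case
      by (auto simp: less_mult_imp_div_less)
       (metis mod_less_divisor mult_zero_right not_gr_zero not_less_zero)
  qed
  have "(\<Sum>i<N * M. g i) = (\<Sum>p\<in>{..<N} \<times> {..<M}. g (case p of (a,b) \<Rightarrow> b + M * a))"
    using sum.reindex_bij_betw[OF bij, of g] by simp
  also have "\<dots> = (\<Sum>a<N. \<Sum>b<M. g (b + M * a))"
    by (simp add: sum.cartesian_product split_beta)
  finally show ?thesis .
qed

lemma sum_prod_digits:
  fixes f :: "nat \<Rightarrow> nat \<Rightarrow> 'a::comm_semiring_1"
  assumes N: "N > 0"
  shows "(\<Sum>x<N^k. \<Sum>y<N^k. \<Prod>s<k. f (digit N s x) (digit N s y)) = (\<Sum>a<N. \<Sum>b<N. f a b) ^ k"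
proof (induction k)
  case 0
  then show ?case by simp
next
  case (Suc k)
  let ?P = "\<lambda>x y. \<Prod>s<k. f (digit N s x) (digit N s y)"
  have "(\<Sum>x<N^Suc k. \<Sum>y<N^Suc k. \<Prod>s<Suc k. f (digit N s x) (digit N s y))
     = (\<Sum>a<N^k. \<Sum>b<N. \<Sum>a'<N^k. \<Sum>b'<N. \<Prod>s<Suc k. f (digit N s (b + N*a)) (digit N s (b' + N*a')))"
    by (simp only: power_Suc2 sum_mixed_radix)
  also have "\<dots> = (\<Sum>a<N^k. \<Sum>b<N. \<Sum>a'<N^k. \<Sum>b'<N. f b b' * ?P a a')"
    by (intro sum.cong refl, subst prod.lessThan_Suc_shift) (simp add: digit_0_mixed digit_Suc_mixed)
  also have "\<dots> = (\<Sum>a<N^k. \<Sum>a'<N^k. \<Sum>b<N. \<Sum>b'<N. f b b' * ?P a a')"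
    by (rule sum.cong[OF refl], rule sum.swap)
  also have "\<dots> = (\<Sum>b<N. \<Sum>b'<N. f b b') * (\<Sum>a<N^k. \<Sum>a'<N^k. ?P a a')"
    by (simp add: sum_distrib_left sum_distrib_right)
  also have "\<dots> = (\<Sum>a<N. \<Sum>b<N. f a b) ^ Suc k" using Suc by simp
  finally show ?case .
qed

text \<open>The same with the two k-digit indices packed into one 2k-digit index, digit s pairing
  with digit k+s.  This is the shape of a k-fold tensor power of two-register states.\<close>
lemma sum_prod_digit_pairs:
  fixes f :: "nat \<Rightarrow> nat \<Rightarrow> 'a::comm_semiring_1"
  assumes N: "N > 0"
  shows "(\<Sum>i<N^(2*k). \<Prod>s<k. f (digit N s i) (digit N (k+s) i)) = (\<Sum>a<N. \<Sum>b<N. f a b) ^ k"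
proof -
  have "(\<Sum>i<N^(2*k). \<Prod>s<k. f (digit N s i) (digit N (k+s) i))
      = (\<Sum>a<N^k. \<Sum>b<N^k. \<Prod>s<k. f (digit N s (b + N^k * a)) (digit N (k+s) (b + N^k * a)))"
    by (simp add: mult_2 power_add sum_mixed_radix)
  also have "\<dots> = (\<Sum>a<N^k. \<Sum>b<N^k. \<Prod>s<k. f (digit N s b) (digit N s a))"
    using N by (intro sum.cong refl prod.cong) (simp_all add: digit_split)
  also have "\<dots> = (\<Sum>b<N^k. \<Sum>a<N^k. \<Prod>s<k. f (digit N s b) (digit N s a))"
    by (rule sum.swap)
  also have "\<dots> = (\<Sum>a<N. \<Sum>b<N. f a b) ^ k" by (rule sum_prod_digits[OF N])
  finally show ?thesis .
qed

section \<open>Finite orthonormal families and Bessel's inequality\<close>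

definition cinner :: "'i set \<Rightarrow> ('i \<Rightarrow> complex) \<Rightarrow> ('i \<Rightarrow> complex) \<Rightarrow> complex" where
  "cinner I f g = (\<Sum>i\<in>I. cnj (f i) * g i)"

definition orthonormal :: "'i set \<Rightarrow> 'x set \<Rightarrow> ('x \<Rightarrow> 'i \<Rightarrow> complex) \<Rightarrow> bool" where
  "orthonormal I X e \<longleftrightarrow> (\<forall>x\<in>X. \<forall>y\<in>X. cinner I (e x) (e y) = (if x = y then 1 else 0))"

lemma cmod_sq_cnj: "complex_of_real ((cmod z)\<^sup>2) = cnj z * z"
  by (metis complex_norm_square mult.commute)

lemma orthonormal_combination_norm:
  assumes on: "orthonormal I X e" and fX: "finite X"
  shows "(\<Sum>i\<in>I. (cmod (\<Sum>x\<in>X. e x i * b x))\<^sup>2) = (\<Sum>x\<in>X. (cmod (b x))\<^sup>2)"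
proof -
  have "complex_of_real (\<Sum>i\<in>I. (cmod (\<Sum>x\<in>X. e x i * b x))\<^sup>2)
      = (\<Sum>i\<in>I. (\<Sum>x\<in>X. cnj (e x i) * cnj (b x)) * (\<Sum>y\<in>X. e y i * b y))"
    by (simp only: of_real_sum cmod_sq_cnj cnj_sum complex_cnj_mult)
  also have "\<dots> = (\<Sum>i\<in>I. \<Sum>x\<in>X. \<Sum>y\<in>X. cnj (b x) * b y * (cnj (e x i) * e y i))"
    by (simp add: sum_distrib_left sum_distrib_right mult_ac)
  also have "\<dots> = (\<Sum>x\<in>X. \<Sum>y\<in>X. cnj (b x) * b y * cinner I (e x) (e y))"
    unfolding cinner_def
    by (subst sum.swap, rule sum.cong[OF refl], subst sum.swap) (simp add: sum_distrib_left)
  also have "\<dots> = (\<Sum>x\<in>X. \<Sum>y\<in>X. if x = y then cnj (b x) * b y else 0)"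
    using on unfolding orthonormal_def by (intro sum.cong refl) auto
  also have "\<dots> = (\<Sum>x\<in>X. cnj (b x) * b x)"
    using fX by (simp add: sum.delta)
  also have "\<dots> = complex_of_real (\<Sum>x\<in>X. (cmod (b x))\<^sup>2)"
    by (simp only: of_real_sum cmod_sq_cnj)
  finally show ?thesis by (simp only: of_real_eq_iff)
qed

lemma sum_cmod_diff_sq:
  "(\<Sum>i\<in>I. (cmod (v i - w i))\<^sup>2)
     = (\<Sum>i\<in>I. (cmod (v i))\<^sup>2) - 2 * Re (cinner I v w) + (\<Sum>i\<in>I. (cmod (w i))\<^sup>2)"
proof -
  have "(cmod (v i - w i))\<^sup>2 = (cmod (v i))\<^sup>2 - 2 * Re (cnj (v i) * w i) + (cmod (w i))\<^sup>2" for i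
    unfolding cmod_power2 by (simp add: power2_eq_square algebra_simps)
  thus ?thesis unfolding cinner_def
    by (simp add: Re_sum sum.distrib sum_subtractf sum_distrib_left)
qed

lemma bessel_inequality:
  assumes on: "orthonormal I X e" and fX: "finite X"
  shows "(\<Sum>x\<in>X. (cmod (cinner I (e x) v))\<^sup>2) \<le> (\<Sum>i\<in>I. (cmod (v i))\<^sup>2)"
proof -
  define a where "a x = cinner I (e x) v" for x
  define S where "S i = (\<Sum>x\<in>X. e x i * a x)" for i
  have coeff_cnj: "(\<Sum>i\<in>I. cnj (v i) * e x i) = cnj (a x)" for x
    by (simp add: a_def cinner_def mult.commute)
  have "cinner I v S = (\<Sum>x\<in>X. a x * (\<Sum>i\<in>I. cnj (v i) * e x i))"
    unfolding cinner_def S_def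
    by (simp add: sum_distrib_left sum_distrib_right mult_ac) (rule sum.swap)
  also have "\<dots> = (\<Sum>x\<in>X. complex_of_real ((cmod (a x))\<^sup>2))"
    by (simp only: coeff_cnj cmod_sq_cnj mult.commute)
  finally have vS: "Re (cinner I v S) = (\<Sum>x\<in>X. (cmod (a x))\<^sup>2)"
    by (simp add: Re_sum)
  have SS: "(\<Sum>i\<in>I. (cmod (S i))\<^sup>2) = (\<Sum>x\<in>X. (cmod (a x))\<^sup>2)"
    unfolding S_def by (rule orthonormal_combination_norm[OF on fX])
  have "0 \<le> (\<Sum>i\<in>I. (cmod (v i - S i))\<^sup>2)" by (simp add: sum_nonneg)
  also have "\<dots> = (\<Sum>i\<in>I. (cmod (v i))\<^sup>2) - (\<Sum>x\<in>X. (cmod (a x))\<^sup>2)"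
    unfolding sum_cmod_diff_sq vS SS by simp
  finally show ?thesis by (simp add: a_def)
qed

text \<open>The orthogonal projector onto the span of a family e of vectors in C^D (orthonormal in the
  intended applications), written as \<Sum>_x e_x e_x^dagger.\<close>
definition proj_onto :: "nat \<Rightarrow> 'x set \<Rightarrow> ('x \<Rightarrow> nat \<Rightarrow> complex) \<Rightarrow> complex mat" where
  "proj_onto D X e = mat D D (\<lambda>(i,j). \<Sum>x\<in>X. e x i * cnj (e x j))"

lemma proj_onto_hermitian: "ctrans (proj_onto D X e) = proj_onto D X e"
  unfolding ctrans_def proj_onto_def by (rule eq_matI) (auto simp: mult.commute)

lemma proj_onto_idempotent:
  assumes on: "orthonormal {..<D} X e" and fX: "finite X"
  shows "proj_onto D X e * proj_onto D X e = proj_onto D X e"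
proof (rule eq_matI)
  fix i j assume "i < dim_row (proj_onto D X e)" and "j < dim_col (proj_onto D X e)"
  hence i: "i < D" and j: "j < D" by (simp_all add: proj_onto_def)
  have "(proj_onto D X e * proj_onto D X e) $$ (i,j)
      = (\<Sum>l<D. (\<Sum>x\<in>X. e x i * cnj (e x l)) * (\<Sum>y\<in>X. e y l * cnj (e y j)))"
    using i j by (simp add: proj_onto_def scalar_prod_def atLeast0LessThan)
  also have "\<dots> = (\<Sum>x\<in>X. \<Sum>y\<in>X. e x i * cnj (e y j) * cinner {..<D} (e x) (e y))"
    unfolding cinner_def
    by (simp add: sum_distrib_left sum_distrib_right mult_ac)
       (subst sum.swap, rule sum.cong[OF refl], subst sum.swap, simp)
  also have "\<dots> = (\<Sum>x\<in>X. \<Sum>y\<in>X. if x = y then e x i * cnj (e y j) else 0)"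
    using on unfolding orthonormal_def by (intro sum.cong refl) auto
  also have "\<dots> = proj_onto D X e $$ (i,j)"
    using fX i j by (simp add: sum.delta proj_onto_def)
  finally show "(proj_onto D X e * proj_onto D X e) $$ (i,j) = proj_onto D X e $$ (i,j)" .
qed (simp_all add: proj_onto_def)

lemma proj_onto_norm:
  assumes on: "orthonormal {..<D} X e" and fX: "finite X"
  shows "(cvec_norm (proj_onto D X e *\<^sub>v vec D f))\<^sup>2 = (\<Sum>x\<in>X. (cmod (cinner {..<D} (e x) f))\<^sup>2)"
proof -
  have entry: "(proj_onto D X e *\<^sub>v vec D f) $ i = (\<Sum>x\<in>X. e x i * cinner {..<D} (e x) f)"
    if i: "i < D" for i
  proof -
    have "(proj_onto D X e *\<^sub>v vec D f) $ i = (\<Sum>l<D. (\<Sum>x\<in>X. e x i * cnj (e x l)) * f l)"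
      using i by (simp add: proj_onto_def scalar_prod_def atLeast0LessThan)
    also have "\<dots> = (\<Sum>x\<in>X. e x i * cinner {..<D} (e x) f)"
      unfolding cinner_def by (simp add: sum_distrib_left sum_distrib_right mult_ac) (rule sum.swap)
    finally show ?thesis .
  qed
  have "(cvec_norm (proj_onto D X e *\<^sub>v vec D f))\<^sup>2
      = (\<Sum>i<D. (cmod ((proj_onto D X e *\<^sub>v vec D f) $ i))\<^sup>2)"
    unfolding cvec_norm_def by (simp add: proj_onto_def sum_nonneg)
  also have "\<dots> = (\<Sum>i<D. (cmod (\<Sum>x\<in>X. e x i * cinner {..<D} (e x) f))\<^sup>2)"
    by (intro sum.cong refl) (simp add: entry)
  also have "\<dots> = (\<Sum>x\<in>X. (cmod (cinner {..<D} (e x) f))\<^sup>2)"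
    by (rule orthonormal_combination_norm[OF on fX])
  finally show ?thesis .
qed

section \<open>The Frobenius inner product and orthogonality of Pauli strings\<close>

definition frob_inner :: "nat \<Rightarrow> complex mat \<Rightarrow> complex mat \<Rightarrow> complex" where
  "frob_inner N A B = (\<Sum>a<N. \<Sum>b<N. cnj (A $$ (a,b)) * B $$ (a,b))"

lemma frob_inner_swap: "frob_inner N B A = cnj (frob_inner N A B)"
  unfolding frob_inner_def by (simp add: mult.commute)

lemma frob_norm_inner:
  assumes "A \<in> carrier_mat N N"
  shows "frob_norm A = sqrt (Re (frob_inner N A A))"
proof -
  have "(\<Sum>i<dim_col A. (ctrans A * A) $$ (i,i)) = (\<Sum>i<N. \<Sum>l<N. cnj (A $$ (l,i)) * A $$ (l,i))"
    using assms by (intro sum.cong refl) (auto simp: ctrans_def scalar_prod_def atLeast0LessThan)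
  also have "\<dots> = frob_inner N A A" unfolding frob_inner_def by (rule sum.swap)
  finally show ?thesis unfolding frob_norm_def by simp
qed

lemma frob_norm_nonneg:
  assumes "A \<in> carrier_mat N N"
  shows "frob_norm A \<ge> 0"
proof -
  have "Re (frob_inner N A A) \<ge> 0" unfolding frob_inner_def by (simp add: sum_nonneg)
  thus ?thesis using frob_norm_inner[OF assms] by simp
qed

lemma unitary_frob_inner:
  assumes "unitary_mat N U"
  shows "frob_inner N U U = of_nat N"
proof -
  have U: "U \<in> carrier_mat N N" and cu: "ctrans U * U = 1\<^sub>m N"
    using assms unfolding unitary_mat_def by auto
  have "(\<Sum>l<N. cnj (U $$ (l,i)) * U $$ (l,i)) = 1" if i: "i < N" for i
  proof -
    have "(ctrans U * U) $$ (i,i) = 1" using cu i by simp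
    thus ?thesis using U i by (simp add: ctrans_def scalar_prod_def atLeast0LessThan)
  qed
  hence "(\<Sum>i<N. \<Sum>l<N. cnj (U $$ (l,i)) * U $$ (l,i)) = of_nat N" by simp
  thus ?thesis unfolding frob_inner_def by (subst sum.swap) simp
qed

lemma kron_index:
  assumes "A \<in> carrier_mat p p" "B \<in> carrier_mat M M" "a < p" "a' < p" "b < M" "b' < M"
  shows "kron A B $$ (b + M * a, b' + M * a') = A $$ (a, a') * B $$ (b, b')"
  using assms mixed_radix_less[of b M a p] mixed_radix_less[of b' M a' p] by (simp add: kron_def)

lemma frob_inner_kron:
  assumes "A \<in> carrier_mat p p" "B \<in> carrier_mat M M" "A' \<in> carrier_mat p p" "B' \<in> carrier_mat M M"
  shows "frob_inner (p * M) (kron A B) (kron A' B') = frob_inner p A A' * frob_inner M B B'"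
proof -
  have "frob_inner (p * M) (kron A B) (kron A' B') =
    (\<Sum>a<p. \<Sum>b<M. \<Sum>a'<p. \<Sum>b'<M. cnj (kron A B $$ (b + M * a, b' + M * a')) * kron A' B' $$ (b + M * a, b' + M * a'))"
    unfolding frob_inner_def by (simp add: sum_mixed_radix)
  also have "\<dots> = (\<Sum>a<p. \<Sum>b<M. \<Sum>a'<p. \<Sum>b'<M. (cnj (A $$ (a,a')) * A' $$ (a,a')) * (cnj (B $$ (b,b')) * B' $$ (b,b')))"
    using assms by (intro sum.cong refl) (simp add: kron_index[OF assms(1,2)] kron_index[OF assms(3,4)])
  also have "\<dots> = (\<Sum>a<p. \<Sum>a'<p. \<Sum>b<M. \<Sum>b'<M. (cnj (A $$ (a,a')) * A' $$ (a,a')) * (cnj (B $$ (b,b')) * B' $$ (b,b')))"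
    by (rule sum.cong[OF refl], rule sum.swap)
  also have "\<dots> = frob_inner p A A' * frob_inner M B B'"
    by (simp only: frob_inner_def sum_distrib_right) (simp only: sum_distrib_left)
  finally show ?thesis .
qed

lemma pauli1_carrier: "pauli1 a \<in> carrier_mat 2 2"
  unfolding pauli1_def mat_of_rows_list_def carrier_mat_def by (auto simp: numeral_2_eq_2)

lemma pauli_string_carrier: "pauli_string xs \<in> carrier_mat (2 ^ length xs) (2 ^ length xs)"
  by (induction xs) (auto simp: kron_def pauli1_def mat_of_rows_list_def)

lemma pauli1_orthogonal:
  assumes "a < 4" "b < 4"
  shows "frob_inner 2 (pauli1 a) (pauli1 b) = (if a = b then 2 else 0)"
proof -
  have "a \<in> {0,1,2,3}" "b \<in> {0,1,2,3}" using assms by auto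
  thus ?thesis
    unfolding frob_inner_def numeral_2_eq_2 by (auto simp: pauli1_def mat_of_rows_list_def)
qed

lemma pauli_string_orthogonal:
  assumes "set xs \<subseteq> {0..<4}" "set ys \<subseteq> {0..<4}" "length xs = length ys"
  shows "frob_inner (2 ^ length xs) (pauli_string xs) (pauli_string ys) = (if xs = ys then 2 ^ length xs else 0)"
  using assms
proof (induction xs arbitrary: ys)
  case Nil
  then show ?case by (simp add: frob_inner_def)
next
  case (Cons a xs)
  then obtain b ys' where ys: "ys = b # ys'" by (cases ys) auto
  have c: "pauli_string ys' \<in> carrier_mat (2 ^ length xs) (2 ^ length xs)"
    using pauli_string_carrier[of ys'] Cons.prems ys by simp
  have "frob_inner (2 ^ length (a # xs)) (pauli_string (a # xs)) (pauli_string ys)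
       = frob_inner 2 (pauli1 a) (pauli1 b) * frob_inner (2 ^ length xs) (pauli_string xs) (pauli_string ys')"
    unfolding ys
    using frob_inner_kron[OF pauli1_carrier[of a] pauli_string_carrier[of xs] pauli1_carrier[of b] c] by simp
  also have "\<dots> = (if a # xs = ys then 2 ^ length (a # xs) else 0)"
    using Cons ys by (simp add: pauli1_orthogonal)
  finally show ?case .
qed

definition pauli_words :: "nat \<Rightarrow> nat list set" where
  "pauli_words n = {xs. length xs = n \<and> set xs \<subseteq> {0..<4}}"

lemma finite_pauli_words: "finite (pauli_words n)"
  unfolding pauli_words_def using finite_lists_length_eq[of "{0..<4::nat}" n] by (simp add: conj_commute)

lemma pauli_string_word_carrier: "x \<in> pauli_words n \<Longrightarrow> pauli_string x \<in> carrier_mat (2^n) (2^n)"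
  using pauli_string_carrier[of x] by (simp add: pauli_words_def)

lemma pauli_words_orthogonal:
  "x \<in> pauli_words n \<Longrightarrow> y \<in> pauli_words n \<Longrightarrow>
     frob_inner (2^n) (pauli_string x) (pauli_string y) = (if x = y then 2^n else 0)"
  using pauli_string_orthogonal[of x y] by (simp add: pauli_words_def)

lemma pauli_string_in_group: "x \<in> pauli_words n \<Longrightarrow> pauli_string x \<in> pauli_group n"
proof -
  assume x: "x \<in> pauli_words n"
  have "pauli_string x = (\<i> ^ 0) \<cdot>\<^sub>m pauli_string x" by (rule eq_matI) auto
  thus ?thesis using x unfolding pauli_group_def pauli_words_def by fastforce
qed

section \<open>The tester circuit\<close>

text \<open>The joint register of the tester holds 2k base-N digits: digits s and k+s (s < k) form
  the s-th copy of C^N \<otimes> C^N.  The unknown unitary always acts on the most significant digit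
  (the ancilla consists of the other 2k-1 digits); after each query the rotation below shifts
  all digits down by one place, moving the least significant digit to the top.\<close>

definition rotate_index :: "nat \<Rightarrow> nat \<Rightarrow> nat \<Rightarrow> nat" where
  "rotate_index N k j = j div N + N ^ (2*k-1) * (j mod N)"

definition rotation_mat :: "nat \<Rightarrow> nat \<Rightarrow> complex mat" where
  "rotation_mat N k = mat (N ^ (2*k)) (N ^ (2*k)) (\<lambda>(j,i). if i = rotate_index N k j then 1 else 0)"

definition norm_const :: "nat \<Rightarrow> nat \<Rightarrow> complex" where
  "norm_const N k = complex_of_real (1 / sqrt (real N) ^ k)"

text \<open>The normalized k-fold tensor power v(A)^(\<otimes>k) of the Choi vector v(A) = N^(-1/2) \<Sum>_{a,b} A_{ab} |a b>
  of an N x N matrix A, with copy s on digits s and k+s.\<close>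
definition choi_power :: "nat \<Rightarrow> nat \<Rightarrow> complex mat \<Rightarrow> nat \<Rightarrow> complex" where
  "choi_power N k A i = norm_const N k * (\<Prod>s<k. A $$ (digit N s i, digit N (k+s) i))"

text \<open>The state after t queries (t \<le> k), in rotated coordinates: copy s carries the factor
  U $$ (.,.) if it has already been queried and the Bell-state factor \<delta> otherwise.\<close>
definition pair_factor :: "nat \<Rightarrow> nat \<Rightarrow> complex mat \<Rightarrow> nat \<Rightarrow> nat \<Rightarrow> nat \<Rightarrow> complex" where
  "pair_factor N k U t i s = (if s + t < k then (if digit N (s+t) i = digit N (k+s+t) i then 1 else 0)
                     else U $$ (digit N (s+t-k) i, digit N (s+t) i))"

definition query_state :: "nat \<Rightarrow> nat \<Rightarrow> complex mat \<Rightarrow> nat \<Rightarrow> nat \<Rightarrow> complex" where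
  "query_state N k U t i = norm_const N k * (\<Prod>s<k. pair_factor N k U t i s)"

lemma power_double_split: "k \<ge> 1 \<Longrightarrow> N ^ (2*k) = N * N ^ (2*k-1)"
  by (cases k) simp_all

lemma rotate_index_less:
  assumes "k \<ge> 1" "N > 0" "j < N ^ (2*k)"
  shows "rotate_index N k j < N ^ (2*k)" "j div N < N ^ (2*k-1)"
proof -
  show 1: "j div N < N ^ (2*k-1)" using assms power_double_split[OF assms(1), of N]
    by (simp add: less_mult_imp_div_less mult.commute)
  show "rotate_index N k j < N ^ (2*k)"
    unfolding rotate_index_def power_double_split[OF assms(1)] using 1 assms(2) by (intro mixed_radix_less) simp_all
qed

lemma kron_id_apply:
  assumes U: "U \<in> carrier_mat N N" and "b0 < m" "a0 < N"
    and v: "dim_vec v = N * m"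
  shows "(kron U (1\<^sub>m m) *\<^sub>v v) $ (b0 + m * a0) = (\<Sum>a<N. U $$ (a0, a) * v $ (b0 + m * a))"
proof -
  have lt: "b0 + m * a0 < N * m" using assms by (intro mixed_radix_less)
  have dr: "dim_row (kron U (1\<^sub>m m)) = N * m" using U by (simp add: kron_def)
  have "(kron U (1\<^sub>m m) *\<^sub>v v) $ (b0 + m * a0) = (\<Sum>l<N * m. kron U (1\<^sub>m m) $$ (b0 + m * a0, l) * v $ l)"
  proof -
    have dc: "dim_col (kron U (1\<^sub>m m)) = N * m" using U by (simp add: kron_def)
    show ?thesis using lt dr dc v by (simp add: scalar_prod_def atLeast0LessThan)
  qed
  also have "\<dots> = (\<Sum>a<N. \<Sum>b<m. kron U (1\<^sub>m m) $$ (b0 + m * a0, b + m * a) * v $ (b + m * a))"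
    by (rule sum_mixed_radix)
  also have "\<dots> = (\<Sum>a<N. \<Sum>b<m. U $$ (a0, a) * (if b0 = b then 1 else 0) * v $ (b + m * a))"
    using assms by (intro sum.cong refl) (simp add: kron_index[OF U one_carrier_mat])
  also have "\<dots> = (\<Sum>a<N. \<Sum>b<m. if b0 = b then U $$ (a0, a) * v $ (b + m * a) else 0)"
    by (intro sum.cong refl) auto
  also have "\<dots> = (\<Sum>a<N. U $$ (a0, a) * v $ (b0 + m * a))"
    using assms by (simp add: sum.delta)
  finally show ?thesis .
qed

lemma rotation_apply:
  assumes "k \<ge> 1" "N > 0" "j < N ^ (2*k)" "dim_vec w = N ^ (2*k)"
  shows "(rotation_mat N k *\<^sub>v w) $ j = w $ (rotate_index N k j)"
proof -
  have p: "rotate_index N k j < N ^ (2*k)" using rotate_index_less assms by blast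
  have "(rotation_mat N k *\<^sub>v w) $ j = (\<Sum>i\<in>{0..<N ^ (2*k)}. (if i = rotate_index N k j then 1 else 0) * w $ i)"
    using assms by (simp add: rotation_mat_def scalar_prod_def)
  also have "\<dots> = (\<Sum>i\<in>{0..<N ^ (2*k)}. if i = rotate_index N k j then w $ i else 0)"
    by (intro sum.cong) auto
  also have "\<dots> = w $ (rotate_index N k j)" using p by (simp add: sum.delta')
  finally show ?thesis .
qed

lemma rotate_index_digits:
  assumes "k \<ge> 1" "N > 0" "j < N ^ (2*k)" "a < N"
  shows "d < 2*k-1 \<Longrightarrow> digit N d (j div N + N ^ (2*k-1) * a) = digit N (Suc d) j"
    and "digit N (2*k-1) (j div N + N ^ (2*k-1) * a) = a"
proof -
  have x: "j div N < N ^ (2*k-1)" using rotate_index_less assms by blast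
  show "d < 2*k-1 \<Longrightarrow> digit N d (j div N + N ^ (2*k-1) * a) = digit N (Suc d) j"
    using digit_split[OF x assms(2), of d a] by (simp add: digit_div)
  show "digit N (2*k-1) (j div N + N ^ (2*k-1) * a) = a"
    using digit_split[OF x assms(2), of "2*k-1" a] assms by (simp add: digit_def)
qed

text \<open>Product of the pair factors at a rotated index: the factor of the copy queried next
  pins its top digit, the others become the factors one step later.\<close>
lemma pair_factor_prod_step:
  assumes k: "k \<ge> 1" and N: "N > 0" and j: "j < N ^ (2*k)" and a: "a < N" and t: "t < k"
  shows "(\<Prod>s<k. pair_factor N k U t (j div N + N ^ (2*k-1) * a) s)
       = (if digit N k j = a then 1 else 0) * (\<Prod>s\<in>{..<k} - {k-1-t}. pair_factor N k U (Suc t) j s)"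
proof -
  let ?i = "j div N + N ^ (2*k-1) * a"
  note D1 = rotate_index_digits(1)[OF k N j a] and D2 = rotate_index_digits(2)[OF k N j a]
  have s0: "k - 1 - t \<in> {..<k}" using t by auto
  have "(\<Prod>s<k. pair_factor N k U t ?i s) = pair_factor N k U t ?i (k-1-t) * (\<Prod>s\<in>{..<k} - {k-1-t}. pair_factor N k U t ?i s)"
    using prod.remove[OF _ s0] by simp
  also have "pair_factor N k U t ?i (k-1-t) = (if digit N k j = a then 1 else 0)"
  proof -
    have e1: "k - 1 - t + t = k - 1" "k + (k - 1 - t) + t = 2*k-1" using t k by auto
    have "digit N (k-1) ?i = digit N k j" using D1[of "k-1"] k by simp
    thus ?thesis using t e1 D2 unfolding pair_factor_def by auto
  qed
  also have "(\<Prod>s\<in>{..<k} - {k-1-t}. pair_factor N k U t ?i s) = (\<Prod>s\<in>{..<k} - {k-1-t}. pair_factor N k U (Suc t) j s)"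
  proof (rule prod.cong[OF refl])
    fix s assume s: "s \<in> {..<k} - {k-1-t}"
    show "pair_factor N k U t ?i s = pair_factor N k U (Suc t) j s"
    proof (cases "s + t < k")
      case True
      hence st: "s + Suc t < k" using s by auto
      have "digit N (s+t) ?i = digit N (Suc (s+t)) j" "digit N (k+s+t) ?i = digit N (Suc (k+s+t)) j"
        using D1 st by auto
      thus ?thesis using True st unfolding pair_factor_def by simp
    next
      case False
      have "digit N (s+t-k) ?i = digit N (Suc (s+t-k)) j" "digit N (s+t) ?i = digit N (Suc (s+t)) j"
        using D1 s t by auto
      moreover have "Suc (s+t-k) = s + Suc t - k" using False by auto
      ultimately show ?thesis using False unfolding pair_factor_def by simp
    qed
  qed
  finally show ?thesis .
qed

lemma query_state_Suc_factor:
  assumes t: "t < k"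
  shows "query_state N k U (Suc t) j
       = U $$ (j mod N, digit N k j) * norm_const N k * (\<Prod>s\<in>{..<k} - {k-1-t}. pair_factor N k U (Suc t) j s)"
proof -
  have s0: "k - 1 - t \<in> {..<k}" using t by auto
  have "pair_factor N k U (Suc t) j (k - 1 - t) = U $$ (j mod N, digit N k j)"
  proof -
    have "k - 1 - t + Suc t = k" using t by auto
    thus ?thesis unfolding pair_factor_def by (simp add: digit_def)
  qed
  thus ?thesis unfolding query_state_def using prod.remove[OF _ s0, of "pair_factor N k U (Suc t) j"]
    by (simp add: mult_ac)
qed

lemma query_step:
  assumes U: "U \<in> carrier_mat N N" and N: "N > 0" and k: "k \<ge> 1" and t: "t < k"
  shows "rotation_mat N k *\<^sub>v (kron U (1\<^sub>m (N^(2*k-1))) *\<^sub>v vec (N^(2*k)) (query_state N k U t))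
       = vec (N^(2*k)) (query_state N k U (Suc t))"
proof (rule eq_vecI)
  let ?m = "N^(2*k-1)"
  let ?Q = "kron U (1\<^sub>m ?m)"
  let ?v = "vec (N^(2*k)) (query_state N k U t)"
  have D: "N^(2*k) = N * ?m" by (rule power_double_split[OF k])
  have dimQ: "dim_row ?Q = N * ?m" using U by (simp add: kron_def)
  show "dim_vec (rotation_mat N k *\<^sub>v (?Q *\<^sub>v ?v)) = dim_vec (vec (N^(2*k)) (query_state N k U (Suc t)))"
    by (simp add: rotation_mat_def)
  fix j assume "j < dim_vec (vec (N^(2*k)) (query_state N k U (Suc t)))"
  hence j: "j < N^(2*k)" by simp
  have jd: "j div N < ?m" using rotate_index_less[OF k N j] by blast
  have jm: "j mod N < N" using N by simp
  let ?s0 = "k - 1 - t"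
  let ?R = "\<Prod>s\<in>{..<k} - {?s0}. pair_factor N k U (Suc t) j s"
  have "(rotation_mat N k *\<^sub>v (?Q *\<^sub>v ?v)) $ j = (?Q *\<^sub>v ?v) $ (j div N + ?m * (j mod N))"
    using rotation_apply[OF k N j] dimQ D by (simp add: rotate_index_def)
  also have "\<dots> = (\<Sum>a<N. U $$ (j mod N, a) * ?v $ (j div N + ?m * a))"
    using kron_id_apply[OF U jd jm] D by simp
  also have "\<dots> = (\<Sum>a<N. U $$ (j mod N, a) * (norm_const N k * ((if digit N k j = a then 1 else 0) * ?R)))"
  proof (rule sum.cong[OF refl])
    fix a assume a: "a \<in> {..<N}"
    have "j div N + ?m * a < N^(2*k)" unfolding D using jd a by (intro mixed_radix_less) auto
    thus "U $$ (j mod N, a) * ?v $ (j div N + ?m * a) = U $$ (j mod N, a) * (norm_const N k * ((if digit N k j = a then 1 else 0) * ?R))"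
      using pair_factor_prod_step[OF k N j _ t, of a U] a by (simp add: query_state_def)
  qed
  also have "\<dots> = (\<Sum>a<N. if digit N k j = a then U $$ (j mod N, a) * norm_const N k * ?R else 0)"
    by (intro sum.cong refl) auto
  also have "\<dots> = U $$ (j mod N, digit N k j) * norm_const N k * ?R"
    using N by (simp add: sum.delta digit_def)
  also have "\<dots> = query_state N k U (Suc t) j"
    using query_state_Suc_factor[OF t] by simp
  also have "\<dots> = vec (N^(2*k)) (query_state N k U (Suc t)) $ j" using j by simp
  finally show "(rotation_mat N k *\<^sub>v (?Q *\<^sub>v ?v)) $ j = vec (N^(2*k)) (query_state N k U (Suc t)) $ j" .
qed

lemma run_ops_replicate: "run_ops Q (replicate t R) v = ((\<lambda>v. R *\<^sub>v (Q *\<^sub>v v)) ^^ t) v"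
  by (induction t arbitrary: v) (simp_all only: replicate.simps run_ops.simps funpow_Suc_right comp_def funpow_0 id_apply)

lemma query_evolution:
  assumes U: "U \<in> carrier_mat N N" and N: "N > 0" and k: "k \<ge> 1"
  shows "t \<le> k \<Longrightarrow> ((\<lambda>v. rotation_mat N k *\<^sub>v (kron U (1\<^sub>m (N^(2*k-1))) *\<^sub>v v)) ^^ t) (vec (N^(2*k)) (query_state N k U 0))
     = vec (N^(2*k)) (query_state N k U t)"
proof (induction t)
  case 0 then show ?case by simp
next
  case (Suc t)
  then show ?case using query_step[OF U N k, of t] by simp
qed

lemma query_state_0:
  assumes "N > 0"
  shows "query_state N k U 0 = choi_power N k (1\<^sub>m N)"
  using assms unfolding query_state_def pair_factor_def choi_power_def by (simp add: digit_less)

lemma query_state_final: "query_state N k U k = choi_power N k U"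
  unfolding query_state_def pair_factor_def choi_power_def by (simp add: add.commute)

lemma norm_const_sq: "N > 0 \<Longrightarrow> cnj (norm_const N k) * norm_const N k = 1 / of_nat N ^ k"
proof -
  assume N: "N > 0"
  have "sqrt (real N) ^ k * sqrt (real N) ^ k = (sqrt (real N) * sqrt (real N)) ^ k"
    by (rule power_mult_distrib[symmetric])
  also have "\<dots> = real N ^ k" by simp
  finally have "(1 / sqrt (real N) ^ k) * (1 / sqrt (real N) ^ k) = 1 / real N ^ k" by simp
  hence "complex_of_real ((1 / sqrt (real N) ^ k) * (1 / sqrt (real N) ^ k)) = 1 / of_nat N ^ k"
    by simp
  thus ?thesis unfolding norm_const_def by (simp only: of_real_mult complex_cnj_complex_of_real)
qed

lemma choi_power_inner:
  assumes N: "N > 0"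
  shows "cinner {..<N^(2*k)} (choi_power N k A) (choi_power N k B) = frob_inner N A B ^ k / of_nat N ^ k"
proof -
  have "cinner {..<N^(2*k)} (choi_power N k A) (choi_power N k B)
     = (\<Sum>i<N^(2*k). (cnj (norm_const N k) * norm_const N k) *
          (\<Prod>s<k. cnj (A $$ (digit N s i, digit N (k+s) i)) * B $$ (digit N s i, digit N (k+s) i)))"
    unfolding cinner_def choi_power_def by (intro sum.cong refl) (simp add: prod.distrib mult_ac)
  also have "\<dots> = (cnj (norm_const N k) * norm_const N k) * frob_inner N A B ^ k"
    using sum_prod_digit_pairs[OF N, of "\<lambda>a b. cnj (A $$ (a,b)) * B $$ (a,b)" k]
    by (simp add: frob_inner_def sum_distrib_left[symmetric])
  finally show ?thesis using norm_const_sq[OF N] by simp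
qed

text \<open>The tester with k queries: start in k Bell pairs, apply U to the first half of each pair
  (one query and one rotation per pair), and accept on the span of the Choi powers of all Pauli
  strings.\<close>
definition pauli_tester :: "nat \<Rightarrow> nat \<Rightarrow> qalg" where
  "pauli_tester n k = \<lparr>anc_dim = (2^n)^(2*k-1),
     init_state = vec ((2^n)^(2*k)) (choi_power (2^n) k (1\<^sub>m (2^n))),
     ops = 1\<^sub>m ((2^n)^(2*k)) # replicate k (rotation_mat (2^n) k),
     accept_proj = proj_onto ((2^n)^(2*k)) (pauli_words n) (\<lambda>x. choi_power (2^n) k (pauli_string x))\<rparr>"

text \<open>The Choi powers of distinct Pauli strings are orthonormal (k \<ge> 1 is needed: for k = 0
  they all coincide).\<close>
lemma choi_power_orthonormal:
  assumes "k \<ge> 1"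
  shows "orthonormal {..<(2^n)^(2*k)} (pauli_words n) (\<lambda>x. choi_power (2^n) k (pauli_string x))"
  unfolding orthonormal_def using assms by (simp add: choi_power_inner pauli_words_orthogonal)

lemma final_state_pauli_tester:
  assumes U: "U \<in> carrier_mat (2^n) (2^n)" and k: "k \<ge> 1"
  shows "final_state (pauli_tester n k) U = vec ((2^n)^(2*k)) (choi_power (2^n) k U)"
proof -
  let ?N = "2^n :: nat"
  have "final_state (pauli_tester n k) U
      = run_ops (kron U (1\<^sub>m (?N^(2*k-1)))) (replicate k (rotation_mat ?N k)) (vec (?N^(2*k)) (query_state ?N k U 0))"
    unfolding final_state_def pauli_tester_def by (simp add: query_state_0)
  also have "\<dots> = vec (?N^(2*k)) (query_state ?N k U k)"
    unfolding run_ops_replicate using query_evolution[OF U _ k, of k] by simp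
  finally show ?thesis by (simp add: query_state_final)
qed

definition pauli_overlap :: "nat \<Rightarrow> complex mat \<Rightarrow> nat list \<Rightarrow> real" where
  "pauli_overlap n U x = cmod (frob_inner (2^n) (pauli_string x) U) / 2^n"

lemma accept_prob_pauli_tester:
  assumes U: "U \<in> carrier_mat (2^n) (2^n)" and k: "k \<ge> 1"
  shows "accept_prob (pauli_tester n k) U = (\<Sum>x\<in>pauli_words n. pauli_overlap n U x ^ (2*k))"
proof -
  let ?N = "2^n :: nat"
  have "accept_prob (pauli_tester n k) U
      = (\<Sum>x\<in>pauli_words n. (cmod (cinner {..<?N^(2*k)} (choi_power ?N k (pauli_string x)) (choi_power ?N k U)))\<^sup>2)"
    unfolding accept_prob_def final_state_pauli_tester[OF U k]
    by (simp add: pauli_tester_def proj_onto_norm[OF choi_power_orthonormal[OF k] finite_pauli_words])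
  also have "\<dots> = (\<Sum>x\<in>pauli_words n. pauli_overlap n U x ^ (2*k))"
  proof (rule sum.cong[OF refl])
    fix x
    have "(cmod (cinner {..<?N^(2*k)} (choi_power ?N k (pauli_string x)) (choi_power ?N k U)))\<^sup>2
        = ((cmod (frob_inner ?N (pauli_string x) U) / 2^n) ^ k)\<^sup>2"
      by (simp add: choi_power_inner norm_divide norm_power power_divide)
    also have "\<dots> = pauli_overlap n U x ^ (2*k)"
      unfolding pauli_overlap_def by (metis power_mult mult.commute)
    finally show "(cmod (cinner {..<?N^(2*k)} (choi_power ?N k (pauli_string x)) (choi_power ?N k U)))\<^sup>2
        = pauli_overlap n U x ^ (2*k)" .
  qed
  finally show ?thesis .
qed

lemma rotate_index_bij:
  assumes k: "k \<ge> 1" and N: "N > 0"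
  shows "bij_betw (rotate_index N k) {..<N^(2*k)} {..<N^(2*k)}"
proof -
  let ?m = "N^(2*k-1)"
  have D: "N^(2*k) = N * ?m" by (rule power_double_split[OF k])
  have m: "?m > 0" using N by simp
  show ?thesis
  proof (rule bij_betw_byWitness[where f' = "\<lambda>i. (i mod ?m) * N + i div ?m"])
    show "\<forall>j\<in>{..<N^(2*k)}. (rotate_index N k j mod ?m) * N + rotate_index N k j div ?m = j"
    proof
      fix j assume j: "j \<in> {..<N^(2*k)}"
      have jd: "j div N < ?m" using rotate_index_less[OF k N] j by auto
      have "rotate_index N k j mod ?m = j div N" "rotate_index N k j div ?m = j mod N"
        using mixed_radix_div_mod[OF jd, of "j mod N"] by (simp_all add: rotate_index_def)
      thus "(rotate_index N k j mod ?m) * N + rotate_index N k j div ?m = j" by simp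
    qed
    show "\<forall>i\<in>{..<N^(2*k)}. rotate_index N k ((i mod ?m) * N + i div ?m) = i"
    proof
      fix i assume i: "i \<in> {..<N^(2*k)}"
      have id: "i div ?m < N" using i D by (simp add: less_mult_imp_div_less)
      have "((i mod ?m) * N + i div ?m) div N = i mod ?m" "((i mod ?m) * N + i div ?m) mod N = i div ?m"
        using id N by simp_all
      thus "rotate_index N k ((i mod ?m) * N + i div ?m) = i" by (simp add: rotate_index_def)
    qed
    show "rotate_index N k ` {..<N^(2*k)} \<subseteq> {..<N^(2*k)}" using rotate_index_less[OF k N] by auto
    show "(\<lambda>i. (i mod ?m) * N + i div ?m) ` {..<N^(2*k)} \<subseteq> {..<N^(2*k)}"
    proof (rule image_subsetI)
      fix i assume "i \<in> {..<N^(2*k)}"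
      hence i: "i < N^(2*k)" by simp
      have id: "i div ?m < N" using i D by (simp add: less_mult_imp_div_less)
      have "i div ?m + N * (i mod ?m) < ?m * N" using id m by (intro mixed_radix_less) simp_all
      thus "(i mod ?m) * N + i div ?m \<in> {..<N^(2*k)}" using D by (simp add: mult.commute)
    qed
  qed
qed

lemma ctrans_one: "ctrans (1\<^sub>m d) = 1\<^sub>m d"
  unfolding ctrans_def by (rule eq_matI) auto

lemma unitary_one: "unitary_mat d (1\<^sub>m d)"
  unfolding unitary_mat_def ctrans_one by simp

lemma permutation_mat_unitary:
  assumes bij: "bij_betw p {..<D} {..<D}"
  shows "unitary_mat D (mat D D (\<lambda>(j,i). if i = p j then 1 else 0))"
proof -
  let ?P = "mat D D (\<lambda>(j,i). if i = p j then (1::complex) else 0)"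
  have inj: "inj_on p {..<D}" using bij by (rule bij_betw_imp_inj_on)
  have ct: "ctrans ?P = mat D D (\<lambda>(i,j). if i = p j then 1 else 0)"
    unfolding ctrans_def by (rule eq_matI) auto
  have left: "ctrans ?P * ?P = 1\<^sub>m D"
  proof (rule eq_matI)
    fix i l assume i: "i < dim_row (1\<^sub>m D)" and l: "l < dim_col (1\<^sub>m D)"
    have "(ctrans ?P * ?P) $$ (i,l) = (\<Sum>j<D. (if i = p j then 1 else 0) * (if l = p j then 1 else 0))"
      unfolding ct using i l by (simp add: scalar_prod_def atLeast0LessThan)
    also have "\<dots> = (\<Sum>q\<in>{..<D}. (if i = q then 1 else 0) * (if l = q then 1 else 0))"
      using sum.reindex_bij_betw[OF bij, of "\<lambda>q. (if i = q then 1 else 0) * (if l = q then (1::complex) else 0)"]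
      by simp
    also have "\<dots> = (\<Sum>q\<in>{..<D}. if q = i then (if l = i then 1 else 0) else 0)"
      by (intro sum.cong refl) auto
    also have "\<dots> = 1\<^sub>m D $$ (i,l)" using i l by (simp add: sum.delta')
    finally show "(ctrans ?P * ?P) $$ (i,l) = 1\<^sub>m D $$ (i,l)" .
  qed (simp_all add: ctrans_def)
  have right: "?P * ctrans ?P = 1\<^sub>m D"
  proof (rule eq_matI)
    fix j l assume j: "j < dim_row (1\<^sub>m D)" and l: "l < dim_col (1\<^sub>m D)"
    have pj: "p j < D" using bij j by (auto dest: bij_betw_apply)
    have "(?P * ctrans ?P) $$ (j,l) = (\<Sum>i<D. (if i = p j then 1 else 0) * (if i = p l then 1 else 0))"
      unfolding ct using j l by (simp add: scalar_prod_def atLeast0LessThan)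
    also have "\<dots> = (\<Sum>i<D. if i = p j then (if p j = p l then 1 else 0) else 0)"
      by (intro sum.cong refl) auto
    also have "\<dots> = (if p j = p l then 1 else 0)" using pj by (simp add: sum.delta)
    also have "\<dots> = 1\<^sub>m D $$ (j,l)" using j l inj by (auto dest: inj_onD)
    finally show "(?P * ctrans ?P) $$ (j,l) = 1\<^sub>m D $$ (j,l)" .
  qed (simp_all add: ctrans_def)
  show ?thesis unfolding unitary_mat_def using left right by simp
qed

lemma unitary_rotation_mat:
  assumes k: "k \<ge> 1" and N: "N > 0"
  shows "unitary_mat (N^(2*k)) (rotation_mat N k)"
  unfolding rotation_mat_def by (rule permutation_mat_unitary[OF rotate_index_bij[OF k N]])

lemma choi_power_unit:
  assumes U: "unitary_mat N U" and N: "N > 0"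
  shows "(\<Sum>i<N^(2*k). (cmod (choi_power N k U i))\<^sup>2) = 1"
proof -
  have "complex_of_real (\<Sum>i<N^(2*k). (cmod (choi_power N k U i))\<^sup>2)
      = cinner {..<N^(2*k)} (choi_power N k U) (choi_power N k U)"
    unfolding cinner_def by (simp only: of_real_sum cmod_sq_cnj)
  also have "\<dots> = 1"
    using N by (simp add: choi_power_inner unitary_frob_inner[OF U])
  finally show ?thesis by (simp only: of_real_eq_1_iff)
qed

lemma valid_pauli_tester:
  assumes k: "k \<ge> 1"
  shows "valid_qalg n (pauli_tester n k)"
proof -
  let ?N = "2^n :: nat"
  have N: "?N > 0" by simp
  have d: "2 ^ n * anc_dim (pauli_tester n k) = ?N^(2*k)"
    using power_double_split[OF k, of ?N] by (simp add: pauli_tester_def)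
  show ?thesis
    unfolding valid_qalg_def Let_def d
    using choi_power_unit[OF unitary_one N, of k] unitary_one unitary_rotation_mat[OF k N]
      proj_onto_hermitian proj_onto_idempotent[OF choi_power_orthonormal[OF k] finite_pauli_words]
    by (auto simp: pauli_tester_def proj_onto_def cvec_norm_def)
qed

lemma phase_exists: "\<exists>\<theta>\<in>{0..<2*pi}. exp (\<i> * complex_of_real \<theta>) * z = complex_of_real (cmod z)"
proof (cases "z = 0")
  case True
  thus ?thesis by (intro bexI[of _ 0]) auto
next
  case False
  define a where "a = Arg z"
  have ab: "-pi < a" "a \<le> pi" using Arg_bounded[of z] by (auto simp: a_def)
  define \<theta> where "\<theta> = (if a \<le> 0 then -a else 2*pi - a)"
  have th: "\<theta> \<in> {0..<2*pi}" using ab by (auto simp: \<theta>_def)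
  have c: "cis \<theta> = cis (-a)"
  proof (cases "a \<le> 0")
    case True thus ?thesis by (simp add: \<theta>_def)
  next
    case False
    have "cis (2*pi - a) = cis (2*pi) * cis (-a)" using cis_mult[of "2*pi" "-a"] by simp
    thus ?thesis using False by (simp add: \<theta>_def)
  qed
  have z: "z = complex_of_real (cmod z) * cis a" using rcis_cmod_Arg[of z] by (simp add: rcis_def a_def)
  have "exp (\<i> * complex_of_real \<theta>) * z = complex_of_real (cmod z) * (cis (-a) * cis a)"
    by (subst z) (simp add: cis_conv_exp[symmetric] c mult_ac)
  also have "\<dots> = complex_of_real (cmod z)" by (simp add: cis_mult)
  finally show ?thesis using th by blast
qed

lemma frob_norm_aligned_diff:
  assumes U: "unitary_mat N U" and A: "A \<in> carrier_mat N N" and AA: "frob_inner N A A = of_nat N"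
    and c: "cmod c = 1" and align: "c * frob_inner N A U = complex_of_real (cmod (frob_inner N A U))"
  shows "frob_norm (c \<cdot>\<^sub>m U - A) = sqrt (2 * N - 2 * cmod (frob_inner N A U))"
proof -
  let ?z = "frob_inner N A U"
  have Uc: "U \<in> carrier_mat N N" using U unfolding unitary_mat_def by auto
  have cc1: "cnj c * c = 1" using c by (metis cmod_sq_cnj of_real_1 one_power2)
  have diff: "c \<cdot>\<^sub>m U - A \<in> carrier_mat N N" using Uc A by auto
  have "frob_inner N (c \<cdot>\<^sub>m U - A) (c \<cdot>\<^sub>m U - A) = (\<Sum>a<N. \<Sum>b<N. (cnj c * c) * (cnj (U $$ (a,b)) * U $$ (a,b))
        - cnj c * (cnj (U $$ (a,b)) * A $$ (a,b)) - c * (cnj (A $$ (a,b)) * U $$ (a,b))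
        + cnj (A $$ (a,b)) * A $$ (a,b))"
    unfolding frob_inner_def using Uc A by (intro sum.cong refl) (simp add: algebra_simps)
  also have "\<dots> = (cnj c * c) * frob_inner N U U - cnj c * frob_inner N U A - c * ?z + frob_inner N A A"
    unfolding frob_inner_def by (simp add: sum.distrib sum_subtractf sum_distrib_left)
  also have "\<dots> = 2 * of_nat N - 2 * complex_of_real (cmod ?z)"
  proof -
    have "cnj c * frob_inner N U A = cnj (c * ?z)" by (simp add: frob_inner_swap[of _ U])
    thus ?thesis using cc1 unitary_frob_inner[OF U] AA align by simp
  qed
  finally show ?thesis using frob_norm_inner[OF diff] by simp
qed

lemma phase_dist_pauli_bound:
  assumes U: "unitary_mat (2^n) U" and x: "x \<in> pauli_words n"
  shows "phase_dist n U (pauli_string x) \<le> sqrt (1 - pauli_overlap n U x)"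
proof -
  let ?N = "2^n :: nat"
  let ?s = "pauli_string x"
  let ?z = "frob_inner ?N ?s U"
  have Uc: "U \<in> carrier_mat ?N ?N" using U unfolding unitary_mat_def by auto
  have sc: "?s \<in> carrier_mat ?N ?N" by (rule pauli_string_word_carrier[OF x])
  obtain \<theta> where th: "\<theta> \<in> {0..<2*pi}" and align: "exp (\<i> * complex_of_real \<theta>) * ?z = complex_of_real (cmod ?z)"
    using phase_exists by blast
  have ss: "frob_inner ?N ?s ?s = of_nat ?N" using pauli_words_orthogonal[OF x x] by simp
  have c: "cmod (exp (\<i> * complex_of_real \<theta>)) = 1" by (simp add: cis_conv_exp[symmetric])
  have "phase_dist n U ?s \<le> frob_norm (exp (\<i> * complex_of_real \<theta>) \<cdot>\<^sub>m U - ?s) / sqrt (2 * 2 ^ n)"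
    unfolding phase_dist_def
  proof (rule cINF_lower[OF _ th], rule bdd_belowI[of _ 0], clarsimp)
    fix t :: real
    have "exp (\<i> * complex_of_real t) \<cdot>\<^sub>m U - ?s \<in> carrier_mat ?N ?N" using Uc sc by auto
    from frob_norm_nonneg[OF this]
    show "0 \<le> frob_norm (exp (\<i> * complex_of_real t) \<cdot>\<^sub>m U - ?s) / sqrt (2 * 2 ^ n)" by simp
  qed
  also have "\<dots> = sqrt (2 * ?N - 2 * cmod ?z) / sqrt (2 * 2 ^ n)"
    using frob_norm_aligned_diff[OF U sc ss c align] by simp
  also have "\<dots> = sqrt (1 - pauli_overlap n U x)"
    unfolding pauli_overlap_def by (simp add: real_sqrt_divide[symmetric] field_simps)
  finally show ?thesis .
qed

text \<open>Bessel's inequality for the Pauli basis: \<Sum>_x r_x^2 \<le> 1.  It is applied to the Choi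
  vectors (k = 1) of the Pauli strings and of U.\<close>
lemma pauli_overlap_bessel:
  assumes U: "unitary_mat (2^n) U"
  shows "(\<Sum>x\<in>pauli_words n. (pauli_overlap n U x)\<^sup>2) \<le> 1"
proof -
  let ?N = "2^n :: nat"
  have "(\<Sum>x\<in>pauli_words n. (pauli_overlap n U x)\<^sup>2)
      = (\<Sum>x\<in>pauli_words n. (cmod (cinner {..<?N^(2*1)} (choi_power ?N 1 (pauli_string x)) (choi_power ?N 1 U)))\<^sup>2)"
  proof (rule sum.cong[OF refl])
    fix x
    have "cinner {..<?N^(2*1)} (choi_power ?N 1 (pauli_string x)) (choi_power ?N 1 U)
        = frob_inner ?N (pauli_string x) U ^ 1 / of_nat ?N ^ 1"
      by (rule choi_power_inner) simp
    thus "(pauli_overlap n U x)\<^sup>2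
        = (cmod (cinner {..<?N^(2*1)} (choi_power ?N 1 (pauli_string x)) (choi_power ?N 1 U)))\<^sup>2"
      by (simp add: pauli_overlap_def norm_divide norm_power)
  qed
  also have "\<dots> \<le> (\<Sum>i<?N^(2*1). (cmod (choi_power ?N 1 U i))\<^sup>2)"
    by (rule bessel_inequality[OF choi_power_orthonormal finite_pauli_words]) simp
  also have "\<dots> = 1" by (rule choi_power_unit[OF U]) simp
  finally show ?thesis .
qed

text \<open>If U is a phase times an element of the Pauli group, then r_x = 1 for its Pauli
  string x, so the tester accepts with certainty.\<close>
lemma completeness:
  assumes U: "unitary_mat (2^n) U" and hp: "has_property n (pauli_group n) U" and k: "k \<ge> 1"
  shows "accept_prob (pauli_tester n k) U \<ge> 1"
proof -
  let ?N = "2^n :: nat"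
  have Uc: "U \<in> carrier_mat ?N ?N" using U unfolding unitary_mat_def by auto
  obtain \<theta> V where V: "V \<in> pauli_group n" and UV: "U = exp (\<i> * complex_of_real \<theta>) \<cdot>\<^sub>m V"
    using hp unfolding has_property_def by blast
  obtain j y where y: "y \<in> pauli_words n" and Vy: "V = (\<i> ^ j) \<cdot>\<^sub>m pauli_string y"
    using V unfolding pauli_group_def pauli_words_def by blast
  let ?s = "pauli_string y"
  define c where "c = exp (\<i> * complex_of_real \<theta>) * \<i> ^ j"
  have cm: "cmod c = 1" unfolding c_def by (simp add: cis_conv_exp[symmetric] norm_mult norm_power)
  have "frob_inner ?N ?s U = c * frob_inner ?N ?s ?s"
    unfolding frob_inner_def UV Vy c_def using pauli_string_word_carrier[OF y]
    by (simp add: sum_distrib_left mult_ac)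
  hence "pauli_overlap n U y = 1"
    using pauli_words_orthogonal[OF y y] cm by (simp add: pauli_overlap_def norm_mult norm_power)
  hence "1 \<le> pauli_overlap n U y ^ (2*k)" by simp
  also have "\<dots> \<le> (\<Sum>x\<in>pauli_words n. pauli_overlap n U x ^ (2*k))"
    by (rule member_le_sum[OF y _ finite_pauli_words]) (simp add: pauli_overlap_def)
  also have "\<dots> = accept_prob (pauli_tester n k) U"
    by (rule accept_prob_pauli_tester[OF Uc k, symmetric])
  finally show ?thesis .
qed

lemma far_overlap_bound:
  assumes U: "unitary_mat (2^n) U" and far: "eps_far n \<epsilon> (pauli_group n) U"
    and e0: "0 < \<epsilon>" and x: "x \<in> pauli_words n"
  shows "pauli_overlap n U x \<le> 1 - \<epsilon>\<^sup>2"
proof -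
  have "\<epsilon> \<le> phase_dist n U (pauli_string x)"
    using far pauli_string_in_group[OF x] unfolding eps_far_def by blast
  also have "\<dots> \<le> sqrt (1 - pauli_overlap n U x)" by (rule phase_dist_pauli_bound[OF U x])
  finally have le: "\<epsilon> \<le> sqrt (1 - pauli_overlap n U x)" .
  hence "0 < sqrt (1 - pauli_overlap n U x)" using e0 by linarith
  hence "0 < 1 - pauli_overlap n U x" by simp
  hence "(sqrt (1 - pauli_overlap n U x))\<^sup>2 = 1 - pauli_overlap n U x" by simp
  moreover have "\<epsilon>\<^sup>2 \<le> (sqrt (1 - pauli_overlap n U x))\<^sup>2"
    using le e0 by (intro power_mono) simp_all
  ultimately show ?thesis by simp
qed

text \<open>Soundness: combining the overlap bound with Bessel's inequality,
  \<Sum>_x r_x^(2k) \<le> max_x r_x^(2(k-1)) \<Sum>_x r_x^2 \<le> (1 - \<epsilon>^2)^(2(k-1)).\<close>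
lemma soundness:
  assumes U: "unitary_mat (2^n) U" and far: "eps_far n \<epsilon> (pauli_group n) U"
    and k: "k \<ge> 1" and e0: "0 < \<epsilon>"
  shows "accept_prob (pauli_tester n k) U \<le> (1 - \<epsilon>\<^sup>2) ^ (2 * (k - 1))"
proof -
  let ?r = "pauli_overlap n U" and ?t = "1 - \<epsilon>\<^sup>2"
  have Uc: "U \<in> carrier_mat (2^n) (2^n)" using U unfolding unitary_mat_def by auto
  have r0: "0 \<le> ?r x" for x by (simp add: pauli_overlap_def)
  have "accept_prob (pauli_tester n k) U = (\<Sum>x\<in>pauli_words n. (?r x)\<^sup>2 * ((?r x)\<^sup>2) ^ (k - 1))"
  proof -
    have "2 * k = 2 + 2 * (k - 1)" using k by simp
    thus ?thesis unfolding accept_prob_pauli_tester[OF Uc k] by (simp only: power_add power_mult)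
  qed
  also have "\<dots> \<le> (\<Sum>x\<in>pauli_words n. (?r x)\<^sup>2 * (?t\<^sup>2) ^ (k - 1))"
  proof (rule sum_mono)
    fix x assume x: "x \<in> pauli_words n"
    have "(?r x)\<^sup>2 \<le> ?t\<^sup>2" using far_overlap_bound[OF U far e0 x] r0[of x] by (intro power_mono) auto
    hence "((?r x)\<^sup>2) ^ (k - 1) \<le> (?t\<^sup>2) ^ (k - 1)" by (rule power_mono) simp
    thus "(?r x)\<^sup>2 * ((?r x)\<^sup>2) ^ (k - 1) \<le> (?r x)\<^sup>2 * (?t\<^sup>2) ^ (k - 1)"
      by (rule mult_left_mono) simp
  qed
  also have "\<dots> = (\<Sum>x\<in>pauli_words n. (?r x)\<^sup>2) * ?t ^ (2 * (k - 1))"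
    by (simp add: sum_distrib_right power_mult)
  also have "\<dots> \<le> ?t ^ (2 * (k - 1))"
    using pauli_overlap_bessel[OF U] by (intro mult_left_le_one_le) (simp_all add: sum_nonneg)
  finally show ?thesis .
qed

text \<open>From Bernoulli's inequality: (1 - x)^m (1 + m x) \<le> (1 - x^2)^m \<le> 1 for 0 \<le> x \<le> 1.\<close>
lemma bernoulli_product_bound:
  fixes x :: real
  assumes "0 \<le> x" "x \<le> 1"
  shows "(1 - x) ^ m * (1 + real m * x) \<le> 1"
proof -
  have "1 + real m * x \<le> (1 + x) ^ m" using Bernoulli_inequality[of x m] assms by simp
  hence "(1 - x) ^ m * (1 + real m * x) \<le> (1 - x) ^ m * (1 + x) ^ m"
    using assms by (intro mult_left_mono) simp_all
  also have "\<dots> = (1 - x\<^sup>2) ^ m" by (simp add: power_mult_distrib[symmetric] algebra_simps power2_eq_square)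
  also have "\<dots> \<le> 1" using assms by (intro power_le_one) (simp_all add: power_le_one)
  finally show ?thesis .
qed

lemma far_power_small:
  fixes \<epsilon> :: real
  assumes e0: "0 < \<epsilon>" and e1: "\<epsilon> \<le> 1" and m: "1 \<le> real m * \<epsilon>\<^sup>2"
  shows "(1 - \<epsilon>\<^sup>2) ^ (2 * m) \<le> 1/3"
proof -
  have x: "0 \<le> \<epsilon>\<^sup>2" "\<epsilon>\<^sup>2 \<le> 1" using e0 e1 by (simp_all add: power_le_one)
  have "(1 - \<epsilon>\<^sup>2) ^ (2 * m) * 3 \<le> (1 - \<epsilon>\<^sup>2) ^ (2 * m) * (1 + real (2 * m) * \<epsilon>\<^sup>2)"
    using m x by (intro mult_left_mono) simp_all
  also have "\<dots> \<le> 1" by (rule bernoulli_product_bound[OF x])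
  finally show ?thesis by simp
qed

text \<open>k = \<lceil>1/\<epsilon>^2\<rceil> + 1 queries suffice for soundness and are at most 3/\<epsilon>^2.\<close>
lemma query_count_choice:
  fixes \<epsilon> :: real
  assumes e0: "0 < \<epsilon>" and e1: "\<epsilon> \<le> 1"
  obtains k where "k \<ge> 1" "1 \<le> real (k - 1) * \<epsilon>\<^sup>2" "real k \<le> 3 / \<epsilon>\<^sup>2"
proof
  define m where "m = nat \<lceil>1 / \<epsilon>\<^sup>2\<rceil>"
  have e2: "0 < \<epsilon>\<^sup>2" "\<epsilon>\<^sup>2 \<le> 1" using e0 e1 by (simp_all add: power_le_one)
  have lower: "1 / \<epsilon>\<^sup>2 \<le> real m" unfolding m_def by (rule real_nat_ceiling_ge)
  have "real m = of_int \<lceil>1 / \<epsilon>\<^sup>2\<rceil>" unfolding m_def using e2 by (simp add: order_less_imp_le)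
  hence upper: "real m \<le> 1 / \<epsilon>\<^sup>2 + 1" by linarith
  show "m + 1 \<ge> 1" by simp
  show "1 \<le> real (m + 1 - 1) * \<epsilon>\<^sup>2" using lower e2 by (simp add: field_simps)
  have "1 \<le> 1 / \<epsilon>\<^sup>2" using e2 by simp
  thus "real (m + 1) \<le> 3 / \<epsilon>\<^sup>2" using upper by simp
qed

lemma pauli_tester_tests:
  assumes e0: "0 < \<epsilon>" and e1: "\<epsilon> \<le> 1" and k: "k \<ge> 1" and kk: "1 \<le> real (k - 1) * \<epsilon>\<^sup>2"
  shows "eps_tests n \<epsilon> (pauli_group n) (pauli_tester n k)"
  unfolding eps_tests_def
proof (intro allI impI conjI)
  fix U assume U: "unitary_mat (2^n) U"
  show "2/3 \<le> accept_prob (pauli_tester n k) U" if "has_property n (pauli_group n) U"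
    using completeness[OF U that k] by linarith
  show "accept_prob (pauli_tester n k) U \<le> 1/3" if "eps_far n \<epsilon> (pauli_group n) U"
    using soundness[OF U that k e0] far_power_small[OF e0 e1 kk] by linarith
qed

text \<open>For \<epsilon> > 1 nothing is \<epsilon>-far from the Pauli group (the phase distance to the identity
  is at most 1), so the query-free tester that always accepts is an \<epsilon>-tester.\<close>
lemma nothing_far_beyond_one:
  assumes U: "unitary_mat (2^n) U" and e: "\<epsilon> > 1"
  shows "\<not> eps_far n \<epsilon> (pauli_group n) U"
proof
  assume far: "eps_far n \<epsilon> (pauli_group n) U"
  have id: "replicate n 0 \<in> pauli_words n" by (simp add: pauli_words_def set_replicate_conv_if)
  have "\<epsilon> \<le> phase_dist n U (pauli_string (replicate n 0))"
    using far pauli_string_in_group[OF id] unfolding eps_far_def by blast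
  also have "\<dots> \<le> sqrt (1 - pauli_overlap n U (replicate n 0))"
    by (rule phase_dist_pauli_bound[OF U id])
  also have "\<dots> \<le> 1" by (simp add: pauli_overlap_def)
  finally show False using e by simp
qed

definition trivial_tester :: "nat \<Rightarrow> qalg" where
  "trivial_tester n = \<lparr>anc_dim = 1, init_state = vec (2^n) (\<lambda>i. if i = 0 then 1 else 0),
     ops = [1\<^sub>m (2^n)], accept_proj = 1\<^sub>m (2^n)\<rparr>"

lemma basis_vector_norm: "cvec_norm (vec (2^n) (\<lambda>i. if i = 0 then 1 else 0)) = 1"
proof -
  have "(\<Sum>i<(2::nat)^n. (cmod (if i = 0 then 1 else 0 :: complex))\<^sup>2) = (\<Sum>i<(2::nat)^n. if i = 0 then 1 else 0)"
    by (intro sum.cong refl) simp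
  thus ?thesis unfolding cvec_norm_def by (simp add: sum.delta')
qed

lemma valid_trivial_tester: "valid_qalg n (trivial_tester n)"
  unfolding valid_qalg_def Let_def trivial_tester_def
  using basis_vector_norm[of n] unitary_one[of "2^n"] ctrans_one[of "2^n"] by auto

lemma accept_prob_trivial_tester: "accept_prob (trivial_tester n) U = 1"
proof -
  have "final_state (trivial_tester n) U = vec (2^n) (\<lambda>i. if i = 0 then 1 else 0)"
    unfolding final_state_def trivial_tester_def by simp
  thus ?thesis unfolding accept_prob_def using basis_vector_norm[of n] by (simp add: trivial_tester_def)
qed

lemma trivial_tester_tests: "\<epsilon> > 1 \<Longrightarrow> eps_tests n \<epsilon> (pauli_group n) (trivial_tester n)"
  unfolding eps_tests_def using accept_prob_trivial_tester nothing_far_beyond_one by auto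

theorem lemma3:
  "\<exists>C::real. C > 0 \<and>
     (\<forall>n::nat. \<forall>\<epsilon>::real. n \<ge> 1 \<longrightarrow> \<epsilon> > 0 \<longrightarrow>
        (\<exists>A. valid_qalg n A \<and> eps_tests n \<epsilon> (pauli_group n) A \<and>
             real (num_queries A) \<le> C / \<epsilon>\<^sup>2))"
proof (intro exI[of _ 3] conjI allI impI)
  fix n :: nat and \<epsilon> :: real
  assume "n \<ge> 1" and e0: "\<epsilon> > 0"
  show "\<exists>A. valid_qalg n A \<and> eps_tests n \<epsilon> (pauli_group n) A \<and> real (num_queries A) \<le> 3 / \<epsilon>\<^sup>2"
  proof (cases "\<epsilon> \<le> 1")
    case True
    then obtain k where k: "k \<ge> 1" "1 \<le> real (k - 1) * \<epsilon>\<^sup>2" "real k \<le> 3 / \<epsilon>\<^sup>2"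
      using query_count_choice e0 by blast
    have "num_queries (pauli_tester n k) = k" by (simp add: num_queries_def pauli_tester_def)
    thus ?thesis using valid_pauli_tester[OF k(1)] pauli_tester_tests[OF e0 True k(1,2)] k(3)
      by (intro exI[of _ "pauli_tester n k"]) simp
  next
    case False
    have "num_queries (trivial_tester n) = 0" by (simp add: num_queries_def trivial_tester_def)
    thus ?thesis using valid_trivial_tester trivial_tester_tests False
      by (intro exI[of _ "trivial_tester n"]) simp
  qed
qed simp

end
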